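(* Let $F$ be a cumulative distribution function of a nonnegative random variable, let $0<\sigma_1<\sigma_2<\cdots<\sigma_T$ be points (arrivals) on the positive real line, and let $\mathbf p=(p_1,\dots,p_T)\in[0,1]^T$. For every $t\in[T]$, the probability that the unit is available at arrival $\sigma_t$ in the random $(F,\boldsymbol\sigma,\mathbf p)$ process is equal to the fraction of the resource available at arrival $\sigma_t$ in the fluid $(F,\boldsymbol\sigma,\mathbf p)$ process. Consequently, the expected reward $r(F,\boldsymbol\sigma,\mathbf p)$ of the random process equals the total reward of the fluid process.
   Context: Random $(F,\boldsymbol\sigma,\mathbf p)$ process: a single unit of a resource starts at time $0$ in the available state; time moves forward along the real line. If the unit is available just prior to $\sigma_t$, then with probability $p_t$ (independently of everything else) it becomes in-use for a random duration $d$ drawn independently from $F$: it is in use on $(\sigma_t,\sigma_t+d)$ and becomes available again at time $\sigma_t+d$. Each switch from available to in-use earns reward $1$; $r(F,\boldsymbol\sigma,\mathbf p)$ denotes the expected total reward. Fluid $(F,\boldsymbol\sigma,\mathbf p)$ process: a single unit of resource is treated as divisible, with fraction $1$ available at time $0$. If a fraction $\delta_t$ is available when $\sigma_t$ arrives, a fraction $p_t\delta_t$ is consumed at $\sigma_t$, earning reward $p_t\delta_t$; of this consumed amount, exactly a fraction $F(d)$ has returned and is available again by time $\sigma_t+d$, for every $d\ge 0$. *)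

theory Defs
  imports "HOL-Probability.Probability"
begin

text \<open>Arrivals are indexed 0,...,T-1 (the paper uses 1,...,T).
  A sample point w assigns to arrival t a pair (coin, duration):
  the coin is a Bernoulli(p t) variable, the duration is drawn from the
  duration distribution M (whose CDF is F = cdf M).\<close>

text \<open>Random process: time until which the unit is busy just before arrival t
  (0 = initially available). The unit is available at arrival t iff busy \<le> sigma t.\<close>
fun busy_until :: "(nat \<Rightarrow> real) \<Rightarrow> (nat \<Rightarrow> bool \<times> real) \<Rightarrow> nat \<Rightarrow> real" where
  "busy_until \<sigma> w 0 = 0"
| "busy_until \<sigma> w (Suc t) =
     (if busy_until \<sigma> w t \<le> \<sigma> t \<and> fst (w t) then \<sigma> t + snd (w t) else busy_until \<sigma> w t)"

definition available :: "(nat \<Rightarrow> real) \<Rightarrow> (nat \<Rightarrow> bool \<times> real) \<Rightarrow> nat \<Rightarrow> bool" where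
  "available \<sigma> w t \<longleftrightarrow> busy_until \<sigma> w t \<le> \<sigma> t"

definition random_space :: "real measure \<Rightarrow> (nat \<Rightarrow> real) \<Rightarrow> nat \<Rightarrow> (nat \<Rightarrow> bool \<times> real) measure" where
  "random_space M p T = PiM {..<T} (\<lambda>t. measure_pmf (bernoulli_pmf (p t)) \<Otimes>\<^sub>M M)"

definition random_reward :: "(nat \<Rightarrow> real) \<Rightarrow> nat \<Rightarrow> (nat \<Rightarrow> bool \<times> real) \<Rightarrow> real" where
  "random_reward \<sigma> T w = (\<Sum>t<T. if available \<sigma> w t \<and> fst (w t) then 1 else 0)"

text \<open>Fluid process: list of available fractions delta_0, ..., delta_(t-1).\<close>
fun fluid_list :: "(real \<Rightarrow> real) \<Rightarrow> (nat \<Rightarrow> real) \<Rightarrow> (nat \<Rightarrow> real) \<Rightarrow> nat \<Rightarrow> real list" where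
  "fluid_list F \<sigma> p 0 = []"
| "fluid_list F \<sigma> p (Suc t) =
     (let ds = fluid_list F \<sigma> p t
      in ds @ [1 - (\<Sum>s<t. p s * ds ! s * (1 - F (\<sigma> t - \<sigma> s)))])"

definition fluid_avail :: "(real \<Rightarrow> real) \<Rightarrow> (nat \<Rightarrow> real) \<Rightarrow> (nat \<Rightarrow> real) \<Rightarrow> nat \<Rightarrow> real" where
  "fluid_avail F \<sigma> p t = fluid_list F \<sigma> p (Suc t) ! t"

definition fluid_reward :: "(real \<Rightarrow> real) \<Rightarrow> (nat \<Rightarrow> real) \<Rightarrow> (nat \<Rightarrow> real) \<Rightarrow> nat \<Rightarrow> real" where
  "fluid_reward F \<sigma> p T = (\<Sum>t<T. p t * fluid_avail F \<sigma> p t)"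

end

theory Submission
  imports Defs
begin

text \<open>Whether the unit is available at arrival t depends only on the coins and durations of the
  earlier arrivals, so it is independent of the coin and duration drawn at arrival t. For
  u \<ge> \<sigma> s (s < t), the unit is busy beyond u after arrival t - 1 exactly when some arrival s < t
  found it available, took it, and drew a duration exceeding u - \<sigma> s; these events are
  disjoint. Hence the probability of being busy at \<sigma> t is the sum over s < t of
  P(available at \<sigma> s) * p s * (1 - F (\<sigma> t - \<sigma> s)), which is the recursion defining the fluid
  availabilities. The rewards follow by linearity of expectation.\<close>

lemma busy_until_cong:
  "(\<And>s. s < t \<Longrightarrow> w s = w' s) \<Longrightarrow> busy_until \<sigma> w t = busy_until \<sigma> w' t"
  by (induction t) auto

lemma measurable_busy_until:
  assumes N: "\<And>i. i \<in> J \<Longrightarrow> sets (N i) = sets (count_space UNIV \<Otimes>\<^sub>M borel)"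
    and J: "{..<t} \<subseteq> J"
  shows "(\<lambda>w. busy_until \<sigma> w t) \<in> borel_measurable (PiM J N)"
  using J
proof (induction t)
  case 0
  then show ?case by simp
next
  case (Suc t)
  then have "{..<t} \<subseteq> J" by auto
  with Suc.IH have "(\<lambda>w. busy_until \<sigma> w t) \<in> borel_measurable (PiM J N)" .
  moreover have "(\<lambda>w. w t) \<in> measurable (PiM J N) (count_space UNIV \<Otimes>\<^sub>M borel)"
    using measurable_component_singleton[of t J N] Suc.prems N by (auto cong: measurable_cong_sets)
  then have "(\<lambda>w. fst (w t)) \<in> measurable (PiM J N) (count_space UNIV)"
    and "(\<lambda>w. snd (w t)) \<in> borel_measurable (PiM J N)"
    by measurable
  ultimately show ?case by simp measurable
qed

lemma indep_vars_PiM_components: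
  assumes "\<And>i. i \<in> I \<Longrightarrow> prob_space (N i)" and "I \<noteq> {}"
  shows "prob_space.indep_vars (PiM I N) N (\<lambda>i w. w i) I"
proof -
  interpret prob_space "PiM I N" by (rule prob_space_PiM) (use assms in auto)
  have "distr (PiM I N) (PiM I N) (\<lambda>w. \<lambda>i\<in>I. w i) = distr (PiM I N) (PiM I N) (\<lambda>w. w)"
    by (rule distr_cong) (auto simp: space_PiM)
  moreover have "PiM I (\<lambda>i. distr (PiM I N) (N i) (\<lambda>w. w i)) = PiM I N"
    by (rule PiM_cong) (auto intro!: distr_PiM_component assms)
  ultimately show ?thesis
    using assms(2) by (subst indep_vars_iff_distr_eq_PiM') auto
qed

lemma measure_PiM_indep_component:
  assumes N: "\<And>i. i \<in> I \<Longrightarrow> prob_space (N i)"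
    and A: "A \<subseteq> I" "s \<in> I" "s \<notin> A"
    and X: "X \<in> measurable (PiM A N) K" and B: "B \<in> sets K" and C: "C \<in> sets (N s)"
  shows "measure (PiM I N) {w \<in> space (PiM I N). X (restrict w A) \<in> B \<and> w s \<in> C}
       = measure (PiM I N) {w \<in> space (PiM I N). X (restrict w A) \<in> B} * measure (N s) C"
proof -
  let ?P = "PiM I N"
  interpret prob_space ?P by (rule prob_space_PiM) (use N in auto)
  have "indep_var (PiM A N) (\<lambda>w. restrict w A) (PiM {s} N) (\<lambda>w. restrict w {s})"
    using A by (intro indep_var_restrict[OF indep_vars_PiM_components[OF N]]) auto
  moreover have "X -` B \<inter> space (PiM A N) \<in> sets (PiM A N)"
    using X B by (rule measurable_sets)
  moreover have "(\<lambda>r. r s) -` C \<inter> space (PiM {s} N) \<in> sets (PiM {s} N)"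
    using C by (intro measurable_sets[OF measurable_component_singleton]) auto
  ultimately have indep: "prob ((\<lambda>w. (restrict w A, restrict w {s})) -`
        ((X -` B \<inter> space (PiM A N)) \<times> ((\<lambda>r. r s) -` C \<inter> space (PiM {s} N))) \<inter> space ?P)
      = prob ((\<lambda>w. restrict w A) -` (X -` B \<inter> space (PiM A N)) \<inter> space ?P)
      * prob ((\<lambda>w. restrict w {s}) -` ((\<lambda>r. r s) -` C \<inter> space (PiM {s} N)) \<inter> space ?P)"
    by (rule indep_varD)
  have restrict_space: "restrict w J \<in> space (PiM J N)" if "w \<in> space ?P" "J \<subseteq> I" for w J
    using that by (auto simp: space_PiM)
  have "(\<lambda>w. (restrict w A, restrict w {s})) -`
        ((X -` B \<inter> space (PiM A N)) \<times> ((\<lambda>r. r s) -` C \<inter> space (PiM {s} N))) \<inter> space ?P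
      = {w \<in> space ?P. X (restrict w A) \<in> B \<and> w s \<in> C}"
    and "(\<lambda>w. restrict w A) -` (X -` B \<inter> space (PiM A N)) \<inter> space ?P
      = {w \<in> space ?P. X (restrict w A) \<in> B}"
    and "(\<lambda>w. restrict w {s}) -` ((\<lambda>r. r s) -` C \<inter> space (PiM {s} N)) \<inter> space ?P
      = (\<lambda>w. w s) -` C \<inter> space ?P"
    using A restrict_space by auto
  with indep have "prob {w \<in> space ?P. X (restrict w A) \<in> B \<and> w s \<in> C}
      = prob {w \<in> space ?P. X (restrict w A) \<in> B} * prob ((\<lambda>w. w s) -` C \<inter> space ?P)"
    by simp
  also have "prob ((\<lambda>w. w s) -` C \<inter> space ?P) = measure (distr ?P (N s) (\<lambda>w. w s)) C"
    using A C by (simp add: measure_distr)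
  also have "distr ?P (N s) (\<lambda>w. w s) = N s"
    using A N by (intro distr_PiM_component) auto
  finally show ?thesis .
qed

lemma length_fluid_list: "length (fluid_list F \<sigma> p t) = t"
  by (induction t) (auto simp: Let_def)

lemma nth_fluid_list: "s < t \<Longrightarrow> fluid_list F \<sigma> p t ! s = fluid_avail F \<sigma> p s"
proof (induction t)
  case 0
  then show ?case by simp
next
  case (Suc t)
  then show ?case
    by (cases "s = t") (auto simp: fluid_avail_def Let_def nth_append length_fluid_list)
qed

lemma fluid_avail_eq:
  "fluid_avail F \<sigma> p t = 1 - (\<Sum>s<t. p s * fluid_avail F \<sigma> p s * (1 - F (\<sigma> t - \<sigma> s)))"
  by (simp add: fluid_avail_def Let_def nth_append length_fluid_list nth_fluid_list)

definition arrival_measure :: "real measure \<Rightarrow> real \<Rightarrow> (bool \<times> real) measure" where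
  "arrival_measure M q = measure_pmf (bernoulli_pmf q) \<Otimes>\<^sub>M M"

lemma random_space_eq_PiM: "random_space M p T = PiM {..<T} (\<lambda>t. arrival_measure M (p t))"
  by (simp add: random_space_def arrival_measure_def)

lemma prob_space_arrival_measure: "prob_space M \<Longrightarrow> prob_space (arrival_measure M q)"
  unfolding arrival_measure_def by (intro prob_space_pair prob_space_measure_pmf)

lemma sets_arrival_measure:
  "sets M = sets borel \<Longrightarrow> sets (arrival_measure M q) = sets (count_space UNIV \<Otimes>\<^sub>M borel)"
  unfolding arrival_measure_def by (rule sets_pair_measure_cong) simp_all

lemma measure_arrival_measure_True_Times:
  assumes "prob_space M" "0 \<le> q" "q \<le> 1" "B \<in> sets M"
  shows "measure (arrival_measure M q) ({True} \<times> B) = q * measure M B"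
proof -
  interpret prob_space M by fact
  have "emeasure (arrival_measure M q) ({True} \<times> B) = ennreal q * emeasure M B"
    using assms by (simp add: arrival_measure_def emeasure_pair_measure_Times emeasure_pmf_single)
  then have "measure (arrival_measure M q) ({True} \<times> B) = enn2real (ennreal q * emeasure M B)"
    by (simp add: measure_def)
  also have "\<dots> = q * measure M B"
    using assms by (simp add: emeasure_eq_measure enn2real_mult)
  finally show ?thesis .
qed

locale random_process =
  fixes M :: "real measure" and \<sigma> p :: "nat \<Rightarrow> real" and T :: nat
  assumes distribution: "real_distribution M"
    and p_prob: "\<And>t. t < T \<Longrightarrow> 0 \<le> p t \<and> p t \<le> 1"
begin

abbreviation "P \<equiv> random_space M p T"

sublocale prob_space P
  unfolding random_space_eq_PiM using distribution
  by (intro prob_space_PiM prob_space_arrival_measure) (simp add: real_distribution_def)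

lemma sets_M: "sets M = sets borel"
  using distribution by (simp add: real_distribution_def real_distribution_axioms_def)

lemma measurable_busy_until_random: "t \<le> T \<Longrightarrow> (\<lambda>w. busy_until \<sigma> w t) \<in> borel_measurable P"
  unfolding random_space_eq_PiM using sets_M
  by (intro measurable_busy_until sets_arrival_measure) auto

lemma measurable_coordinate:
  assumes "t < T" shows "(\<lambda>w. w t) \<in> measurable P (count_space UNIV \<Otimes>\<^sub>M borel)"
proof -
  have "(\<lambda>w. w t) \<in> measurable P (arrival_measure M (p t))"
    unfolding random_space_eq_PiM by (rule measurable_component_singleton) (use assms in simp)
  then show ?thesis
    by (subst (asm) measurable_cong_sets[OF refl sets_arrival_measure[OF sets_M]])
qed

lemma sets_available_coin:
  assumes "t < T" "B \<in> sets borel"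
  shows "{w \<in> space P. available \<sigma> w t \<and> fst (w t) \<and> snd (w t) \<in> B} \<in> sets P"
proof -
  have [measurable]: "(\<lambda>w. busy_until \<sigma> w t) \<in> borel_measurable P"
      "(\<lambda>w. w t) \<in> measurable P (count_space UNIV \<Otimes>\<^sub>M borel)"
    using assms measurable_busy_until_random measurable_coordinate by auto
  show ?thesis
    using assms(2) unfolding available_def by measurable
qed

lemma prob_available_coin:
  assumes t: "t < T" and B: "B \<in> sets borel"
  shows "prob {w \<in> space P. available \<sigma> w t \<and> fst (w t) \<and> snd (w t) \<in> B}
       = prob {w \<in> space P. available \<sigma> w t} * (p t * measure M B)"
proof -
  let ?N = "\<lambda>t. arrival_measure M (p t)"
  have busy_restrict: "busy_until \<sigma> (restrict w {..<t}) t = busy_until \<sigma> w t" for w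
    by (rule busy_until_cong) simp
  have "measure (PiM {..<T} ?N)
          {w \<in> space (PiM {..<T} ?N). busy_until \<sigma> (restrict w {..<t}) t \<in> {..\<sigma> t} \<and> w t \<in> {True} \<times> B}
      = measure (PiM {..<T} ?N) {w \<in> space (PiM {..<T} ?N). busy_until \<sigma> (restrict w {..<t}) t \<in> {..\<sigma> t}}
      * measure (?N t) ({True} \<times> B)"
  proof (rule measure_PiM_indep_component)
    show "(\<lambda>w. busy_until \<sigma> w t) \<in> borel_measurable (PiM {..<t} ?N)"
      using sets_M by (intro measurable_busy_until sets_arrival_measure) auto
    show "{True} \<times> B \<in> sets (?N t)"
      using B sets_M by (simp add: sets_arrival_measure)
  qed (use t distribution in \<open>auto intro: prob_space_arrival_measure simp: real_distribution_def\<close>)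
  moreover have "measure (?N t) ({True} \<times> B) = p t * measure M B"
    using t B sets_M distribution p_prob
    by (intro measure_arrival_measure_True_Times) (auto simp: real_distribution_def)
  ultimately show ?thesis
    unfolding random_space_eq_PiM available_def busy_restrict by (simp add: mem_Times_iff)
qed

lemma measure_greaterThan_eq_1_minus_cdf: "measure M {x<..} = 1 - cdf M x"
proof -
  have "{x<..} = space M - {..x}"
    using real_distribution.space_eq_univ[OF distribution] by auto
  then show ?thesis
    using distribution sets_M
    by (simp add: real_distribution_def prob_space.prob_compl cdf_def)
qed

lemma prob_busy_beyond:
  assumes "t \<le> T" and "0 \<le> u" and "\<And>s. s < t \<Longrightarrow> \<sigma> s \<le> u"
  shows "prob {w \<in> space P. u < busy_until \<sigma> w t}
       = (\<Sum>s<t. prob {w \<in> space P. available \<sigma> w s} * p s * (1 - cdf M (u - \<sigma> s)))"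
  using assms
proof (induction t)
  case 0
  then show ?case by simp
next
  case (Suc t)
  then have t: "t < T" and "\<sigma> t \<le> u" by auto
  let ?taken = "{w \<in> space P. available \<sigma> w t \<and> fst (w t) \<and> snd (w t) \<in> {u - \<sigma> t<..}}"
  let ?busy = "{w \<in> space P. u < busy_until \<sigma> w t}"
  have busy_Suc: "{w \<in> space P. u < busy_until \<sigma> w (Suc t)} = ?taken \<union> ?busy"
    and disjoint: "?taken \<inter> ?busy = {}"
    using \<open>\<sigma> t \<le> u\<close> by (auto simp: available_def)
  have "?busy \<in> sets P"
    using measurable_busy_until_random[of t] t by simp measurable
  then have "prob {w \<in> space P. u < busy_until \<sigma> w (Suc t)} = prob ?taken + prob ?busy"
    unfolding busy_Suc using t disjoint by (intro finite_measure_Union sets_available_coin) auto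
  also have "prob ?taken = prob {w \<in> space P. available \<sigma> w t} * p t * (1 - cdf M (u - \<sigma> t))"
    using prob_available_coin[OF t, of "{u - \<sigma> t<..}"]
    by (simp add: measure_greaterThan_eq_1_minus_cdf mult.assoc)
  also have "prob ?busy = (\<Sum>s<t. prob {w \<in> space P. available \<sigma> w s} * p s * (1 - cdf M (u - \<sigma> s)))"
    using Suc by simp
  finally show ?case by simp
qed

lemma prob_available_taken:
  assumes "t < T"
  shows "prob {w \<in> space P. available \<sigma> w t \<and> fst (w t)} = p t * prob {w \<in> space P. available \<sigma> w t}"
proof -
  have "measure M UNIV = 1"
    using distribution real_distribution.space_eq_univ[OF distribution]
    by (metis prob_space.prob_space real_distribution_def)
  then show ?thesis
    using prob_available_coin[OF assms, of UNIV] by simp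
qed

lemma expectation_random_reward:
  "expectation (random_reward \<sigma> T) = (\<Sum>t<T. p t * prob {w \<in> space P. available \<sigma> w t})"
proof -
  let ?E = "\<lambda>t. {w \<in> space P. available \<sigma> w t \<and> fst (w t)}"
  have E: "?E t \<in> sets P" if "t < T" for t
    using sets_available_coin[OF that, of UNIV] by simp
  have "expectation (random_reward \<sigma> T) = expectation (\<lambda>w. \<Sum>t<T. indicator (?E t) w)"
    unfolding random_reward_def
    by (intro Bochner_Integration.integral_cong refl sum.cong) (auto simp: indicator_def)
  also have "\<dots> = (\<Sum>t<T. prob (?E t))"
    using E by (subst Bochner_Integration.integral_sum) (auto simp: emeasure_eq_measure)
  also have "\<dots> = (\<Sum>t<T. p t * prob {w \<in> space P. available \<sigma> w t})"
    by (intro sum.cong refl prob_available_taken) simp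
  finally show ?thesis .
qed

lemma prob_available_eq_fluid_avail:
  assumes nonneg: "\<And>t. t < T \<Longrightarrow> 0 \<le> \<sigma> t" and mono: "mono_on {..<T} \<sigma>" and "t < T"
  shows "prob {w \<in> space P. available \<sigma> w t} = fluid_avail (cdf M) \<sigma> p t"
  using \<open>t < T\<close>
proof (induction t rule: less_induct)
  case (less t)
  have "{w \<in> space P. available \<sigma> w t} = space P - {w \<in> space P. \<sigma> t < busy_until \<sigma> w t}"
    by (auto simp: available_def)
  then have "prob {w \<in> space P. available \<sigma> w t} = 1 - prob {w \<in> space P. \<sigma> t < busy_until \<sigma> w t}"
    using measurable_busy_until_random[of t] less.prems by (simp add: prob_compl) measurable
  also have "prob {w \<in> space P. \<sigma> t < busy_until \<sigma> w t}
      = (\<Sum>s<t. prob {w \<in> space P. available \<sigma> w s} * p s * (1 - cdf M (\<sigma> t - \<sigma> s)))"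
    using less.prems nonneg mono by (intro prob_busy_beyond) (auto intro: mono_onD)
  also have "\<dots> = (\<Sum>s<t. p s * fluid_avail (cdf M) \<sigma> p s * (1 - cdf M (\<sigma> t - \<sigma> s)))"
    using less by (intro sum.cong) auto
  finally show ?case by (simp add: fluid_avail_eq[of _ _ _ t])
qed

end

theorem lemma1:
  fixes M :: "real measure" and \<sigma> :: "nat \<Rightarrow> real" and p :: "nat \<Rightarrow> real" and T :: nat
  assumes "real_distribution M"
    and "AE x in M. 0 \<le> x"
    and "\<forall>t<T. 0 < \<sigma> t"
    and "\<forall>s t. s < t \<and> t < T \<longrightarrow> \<sigma> s < \<sigma> t"
    and "\<forall>t<T. 0 \<le> p t \<and> p t \<le> 1"
  shows "(\<forall>t<T. measure (random_space M p T) {w \<in> space (random_space M p T). available \<sigma> w t}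
                 = fluid_avail (cdf M) \<sigma> p t)
       \<and> integral\<^sup>L (random_space M p T) (random_reward \<sigma> T) = fluid_reward (cdf M) \<sigma> p T"
proof -
  interpret random_process M \<sigma> p T
    using assms(1,5) by (simp add: random_process_def)
  have mono: "mono_on {..<T} \<sigma>"
    using assms(4) by (intro mono_onI) (auto simp: le_less)
  have avail: "prob {w \<in> space P. available \<sigma> w t} = fluid_avail (cdf M) \<sigma> p t" if "t < T" for t
    using assms(3) mono that by (intro prob_available_eq_fluid_avail) (auto intro: less_imp_le)
  moreover have "expectation (random_reward \<sigma> T) = fluid_reward (cdf M) \<sigma> p T"
    unfolding expectation_random_reward fluid_reward_def by (simp add: avail)
  ultimately show ?thesis
    by simp
qed

end
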